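(* Let $n\in\mathbb{N}$, let $W$ be a subspace of $\mathcal{T}_n$, and let $V=\mathcal{T}_n/W$. Then the matrix unit ball of $V$ is operator compact.
   Context: $\mathcal{T}_n$ denotes the trace class operators on $\mathbb{C}^n$ with the operator space structure of the dual of $M_n$, and $V=\mathcal{T}_n/W$ carries the quotient operator space structure. The matrix unit ball of an operator space $V$ is the matrix set $(B_k)_k$ with $B_k$ the closed unit ball of $M_k(V)$. $\mathcal{K}$ denotes the compact operators on $\ell^2$ and $\mathcal{K}(V)=\mathcal{K}\check{\otimes}V$ the operator-space minimal tensor product (completion of $M_\infty(V)$). $\mathcal{T}$ is the trace class on $\ell^2$ as operator space dual of $\mathcal{K}$, $M_k(\mathcal{T})\cong\mathcal{CB}(\mathcal{K},M_k)$ with norm $\|\cdot\|_{\mathcal{T}}$, $M_\infty\subseteq\mathcal{T}$, and $(\sigma\otimes\mathrm{id})(x)\in M_k(V)$ is the slice map. A matrix set $\boldsymbol{X}=(X_k)$, $X_k\subseteq M_k(V)$, is operator compact if each $X_k$ is closed and there is $x\in\mathcal{K}(V)$ with $X_k\subseteq\overline{\{(\sigma\otimes\mathrm{id})(x):\sigma\in M_k(M_\infty),\|\sigma\|_{\mathcal{T}}\le1\}}$ for all $k$. *)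

theory Defs
  imports Complex_Main
begin

text \<open>Elements of T_n are complex matrices indexed by a finite type 'n
(so n = CARD('n)).  A matrix over T_n of size k is a function
nat => nat => ('n => 'n => complex), only entries with i,j < k being relevant.
Elements of M_k(V), V = T_n / W, are represented by representatives in M_k(T_n).\<close>

type_synonym 'n tn = "'n \<Rightarrow> 'n \<Rightarrow> complex"

definition opnorm :: "'i set \<Rightarrow> 'j set \<Rightarrow> ('i \<Rightarrow> 'j \<Rightarrow> complex) \<Rightarrow> real" where
  "opnorm I J A = Sup {sqrt (\<Sum>i\<in>I. (cmod (\<Sum>j\<in>J. A i j * \<xi> j))\<^sup>2) | \<xi>.
                        (\<Sum>j\<in>J. (cmod (\<xi> j))\<^sup>2) \<le> 1}"

definition is_subspace_Tn :: "'n::finite tn set \<Rightarrow> bool" where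
  "is_subspace_Tn W \<longleftrightarrow> (\<lambda>p q. 0) \<in> W \<and>
     (\<forall>x\<in>W. \<forall>y\<in>W. (\<lambda>p q. x p q + y p q) \<in> W) \<and>
     (\<forall>c::complex. \<forall>x\<in>W. (\<lambda>p q. c * x p q) \<in> W)"

text \<open>Norm of M_k(T_n) = CB(M_n, M_k): cb-norm of a |-> [<X_ij, a>], with the duality
<rho, a> = sum_{p,q} rho p q * a p q.\<close>
definition Mk_Tn_norm :: "nat \<Rightarrow> (nat \<Rightarrow> nat \<Rightarrow> 'n::finite tn) \<Rightarrow> real" where
  "Mk_Tn_norm k X = Sup {opnorm ({..<m} \<times> {..<k}) ({..<m} \<times> {..<k})
        (\<lambda>(r,i) (s,j). \<Sum>p\<in>UNIV. \<Sum>q\<in>UNIV. X i j p q * A r s p q) | m A.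
        opnorm ({..<m} \<times> (UNIV::'n set)) ({..<m} \<times> (UNIV::'n set))
          (\<lambda>(r,p) (s,q). (A::nat \<Rightarrow> nat \<Rightarrow> 'n tn) r s p q) \<le> 1}"

text \<open>Norm of M_k(T) = CB(K, M_k) for sigma with finitely supported entries (sigma in M_k(M_infinity)):
supremum over finite matrices A in M_m(M_M) (dense in M_m(K)).\<close>
definition Mk_T_norm :: "nat \<Rightarrow> (nat \<Rightarrow> nat \<Rightarrow> nat \<Rightarrow> nat \<Rightarrow> complex) \<Rightarrow> real" where
  "Mk_T_norm k \<sigma> = Sup {opnorm ({..<m} \<times> {..<k}) ({..<m} \<times> {..<k})
        (\<lambda>(r,i) (s,j). \<Sum>p<M. \<Sum>q<M. \<sigma> i j p q * A r s p q) | m M A.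
        opnorm ({..<m} \<times> {..<M}) ({..<m} \<times> {..<M})
          (\<lambda>(r,p) (s,q). (A::nat \<Rightarrow> nat \<Rightarrow> nat \<Rightarrow> nat \<Rightarrow> complex) r s p q) \<le> 1}"

text \<open>Quotient norm of M_k(V) = M_k(T_n)/M_k(W), evaluated on a representative.\<close>
definition qnorm :: "'n::finite tn set \<Rightarrow> nat \<Rightarrow> (nat \<Rightarrow> nat \<Rightarrow> 'n tn) \<Rightarrow> real" where
  "qnorm W k X = Inf {Mk_Tn_norm k (\<lambda>i j p q. X i j p q - Y i j p q) | Y.
                       \<forall>i<k. \<forall>j<k. Y i j \<in> W}"

definition mdiff :: "(nat \<Rightarrow> nat \<Rightarrow> 'n tn) \<Rightarrow> (nat \<Rightarrow> nat \<Rightarrow> 'n tn) \<Rightarrow> nat \<Rightarrow> nat \<Rightarrow> 'n tn" where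
  "mdiff X Y = (\<lambda>i j p q. X i j p q - Y i j p q)"

definition trunc :: "nat \<Rightarrow> (nat \<Rightarrow> nat \<Rightarrow> 'n tn) \<Rightarrow> nat \<Rightarrow> nat \<Rightarrow> 'n tn" where
  "trunc N x = (\<lambda>i j. if i < N \<and> j < N then x i j else (\<lambda>p q. 0))"

text \<open>x : infinite matrix over V (entries given by representatives) belongs to
K(V) = completion of M_infinity(V): its finite truncations form a Cauchy sequence.\<close>
definition in_KV :: "'n::finite tn set \<Rightarrow> (nat \<Rightarrow> nat \<Rightarrow> 'n tn) \<Rightarrow> bool" where
  "in_KV W x \<longleftrightarrow> (\<forall>\<epsilon>>0. \<exists>N0. \<forall>N\<ge>N0. \<forall>M\<ge>N0.
       qnorm W (max N M) (mdiff (trunc N x) (trunc M x)) < \<epsilon>)"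

text \<open>Slice map (sigma (x) id)(x) in M_k(V) for sigma supported in N x N.\<close>
definition slice :: "nat \<Rightarrow> (nat \<Rightarrow> nat \<Rightarrow> nat \<Rightarrow> nat \<Rightarrow> complex) \<Rightarrow> (nat \<Rightarrow> nat \<Rightarrow> 'n tn)
                      \<Rightarrow> nat \<Rightarrow> nat \<Rightarrow> 'n tn" where
  "slice N \<sigma> x = (\<lambda>i j a b. \<Sum>p<N. \<Sum>q<N. \<sigma> i j p q * x p q a b)"

definition supported_in :: "nat \<Rightarrow> (nat \<Rightarrow> nat \<Rightarrow> nat \<Rightarrow> nat \<Rightarrow> complex) \<Rightarrow> bool" where
  "supported_in N \<sigma> \<longleftrightarrow> (\<forall>i j p q. N \<le> p \<or> N \<le> q \<longrightarrow> \<sigma> i j p q = 0)"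

text \<open>A matrix set over V, given as predicates S k on representatives in M_k(T_n).
Closedness of S k in M_k(V) and containment in the closure of the slices of x.\<close>
definition operator_compact ::
  "'n::finite tn set \<Rightarrow> (nat \<Rightarrow> (nat \<Rightarrow> nat \<Rightarrow> 'n tn) \<Rightarrow> bool) \<Rightarrow> bool" where
  "operator_compact W S \<longleftrightarrow>
     (\<forall>k X. (\<forall>\<epsilon>>0. \<exists>Y. S k Y \<and> qnorm W k (mdiff X Y) < \<epsilon>) \<longrightarrow> S k X) \<and>
     (\<exists>x. in_KV W x \<and>
        (\<forall>k X. S k X \<longrightarrow>
           (\<forall>\<epsilon>>0. \<exists>N \<sigma>. supported_in N \<sigma> \<and> Mk_T_norm k \<sigma> \<le> 1 \<and>
                 qnorm W k (mdiff X (slice N \<sigma> x)) < \<epsilon>)))"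

definition matrix_unit_ball :: "'n::finite tn set \<Rightarrow> nat \<Rightarrow> (nat \<Rightarrow> nat \<Rightarrow> 'n tn) \<Rightarrow> bool" where
  "matrix_unit_ball W k X \<longleftrightarrow> qnorm W k X \<le> 1"

end

(*
  The matrix units x = [e_(p,q)] of M_n(T_n), viewed as an element of K(V), witness operator
  compactness. Slicing x with sigma = [Z_ij] (the coefficients of Z in M_k(T_n), moved to
  indices in nat) returns Z, and the norm of sigma in M_k(T) is at most that of Z in M_k(T_n),
  because every test matrix in M_m(M_M) can be compressed to the n indices of T_n without
  increasing its norm. If X lies in the unit ball of M_k(V), it has a representative X - Y of
  norm < 1 + e, and Z = (X - Y)/(1 + e) has norm at most 1 and lies within e of X in M_k(V).
  Closedness of the ball follows from the triangle inequality of the quotient norm.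
*)

theory Submission
  imports Defs "HOL-Analysis.L2_Norm" "HOL-Library.Cardinality"
begin

section \<open>Operator norms of finite matrices\<close>

lemma bdd_above_opnorm_set:
  assumes "finite I" "finite J"
  shows "bdd_above {sqrt (\<Sum>i\<in>I. (cmod (\<Sum>j\<in>J. A i j * \<xi> j))\<^sup>2) | \<xi>.
                      (\<Sum>j\<in>J. (cmod (\<xi> j))\<^sup>2) \<le> 1}"
proof (rule bdd_aboveI, safe)
  fix \<xi> :: "'b \<Rightarrow> complex" assume \<xi>: "(\<Sum>j\<in>J. (cmod (\<xi> j))\<^sup>2) \<le> 1"
  have "cmod (\<xi> j) \<le> 1" if "j \<in> J" for j
  proof -
    have "(cmod (\<xi> j))\<^sup>2 \<le> 1"
      using member_le_sum[of j J "\<lambda>j. (cmod (\<xi> j))\<^sup>2"] that assms(2) \<xi> by simp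
    then show ?thesis by (simp add: power_le_one_iff)
  qed
  then have row: "cmod (\<Sum>j\<in>J. A i j * \<xi> j) \<le> (\<Sum>j\<in>J. cmod (A i j))" for i
    by (intro order.trans[OF norm_sum] sum_mono) (simp add: norm_mult mult_left_le)
  have "sqrt (\<Sum>i\<in>I. (cmod (\<Sum>j\<in>J. A i j * \<xi> j))\<^sup>2)
      = L2_set (\<lambda>i. cmod (\<Sum>j\<in>J. A i j * \<xi> j)) I"
    by (simp add: L2_set_def)
  also have "\<dots> \<le> (\<Sum>i\<in>I. cmod (\<Sum>j\<in>J. A i j * \<xi> j))"
    by (rule L2_set_le_sum) simp
  also have "\<dots> \<le> (\<Sum>i\<in>I. \<Sum>j\<in>J. cmod (A i j))"
    by (intro sum_mono row)
  finally show "sqrt (\<Sum>i\<in>I. (cmod (\<Sum>j\<in>J. A i j * \<xi> j))\<^sup>2) \<le> (\<Sum>i\<in>I. \<Sum>j\<in>J. cmod (A i j))" .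
qed

lemma le_opnorm:
  assumes "finite I" "finite J" "(\<Sum>j\<in>J. (cmod (\<xi> j))\<^sup>2) \<le> 1"
  shows "sqrt (\<Sum>i\<in>I. (cmod (\<Sum>j\<in>J. A i j * \<xi> j))\<^sup>2) \<le> opnorm I J A"
  unfolding opnorm_def
  by (rule cSup_upper[OF _ bdd_above_opnorm_set[OF assms(1,2)]]) (use assms(3) in blast)

lemma opnorm_le:
  assumes "\<And>\<xi>. (\<Sum>j\<in>J. (cmod (\<xi> j))\<^sup>2) \<le> 1 \<Longrightarrow>
             sqrt (\<Sum>i\<in>I. (cmod (\<Sum>j\<in>J. A i j * \<xi> j))\<^sup>2) \<le> c"
  shows "opnorm I J A \<le> c"
  unfolding opnorm_def
proof (rule cSup_least)
  show "{sqrt (\<Sum>i\<in>I. (cmod (\<Sum>j\<in>J. A i j * \<xi> j))\<^sup>2) | \<xi>.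
           (\<Sum>j\<in>J. (cmod (\<xi> j))\<^sup>2) \<le> 1} \<noteq> {}"
    by (rule ex_in_conv[THEN iffD1], rule exI, rule CollectI, rule exI[of _ "\<lambda>_. 0"]) simp
qed (use assms in blast)

lemma opnorm_cong:
  assumes "\<And>i j. i \<in> I \<Longrightarrow> j \<in> J \<Longrightarrow> A i j = B i j"
  shows "opnorm I J A = opnorm I J B"
  unfolding opnorm_def using assms by (simp cong: sum.cong)

lemma opnorm_le_opnormI:
  assumes "finite I'" "finite J'"
    and "\<And>\<xi>. (\<Sum>j\<in>J. (cmod (\<xi> j))\<^sup>2) \<le> 1 \<Longrightarrow> \<exists>\<xi>'. (\<Sum>j\<in>J'. (cmod (\<xi>' j))\<^sup>2) \<le> 1 \<and>
          (\<Sum>i\<in>I. (cmod (\<Sum>j\<in>J. B i j * \<xi> j))\<^sup>2) \<le> (\<Sum>i\<in>I'. (cmod (\<Sum>j\<in>J'. A i j * \<xi>' j))\<^sup>2)"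
  shows "opnorm I J B \<le> opnorm I' J' A"
proof (rule opnorm_le)
  fix \<xi> assume "(\<Sum>j\<in>J. (cmod (\<xi> j))\<^sup>2) \<le> 1"
  then obtain \<xi>' where "(\<Sum>j\<in>J'. (cmod (\<xi>' j))\<^sup>2) \<le> 1" and
     "(\<Sum>i\<in>I. (cmod (\<Sum>j\<in>J. B i j * \<xi> j))\<^sup>2) \<le> (\<Sum>i\<in>I'. (cmod (\<Sum>j\<in>J'. A i j * \<xi>' j))\<^sup>2)"
    using assms(3) by blast
  then show "sqrt (\<Sum>i\<in>I. (cmod (\<Sum>j\<in>J. B i j * \<xi> j))\<^sup>2) \<le> opnorm I' J' A"
    using le_opnorm[OF assms(1,2)] real_sqrt_le_mono order_trans by blast
qed

lemma opnorm_triangle: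
  assumes "finite I" "finite J"
  shows "opnorm I J (\<lambda>i j. A i j + B i j) \<le> opnorm I J A + opnorm I J B"
proof (rule opnorm_le)
  fix \<xi> assume \<xi>: "(\<Sum>j\<in>J. (cmod (\<xi> j))\<^sup>2) \<le> 1"
  have "sqrt (\<Sum>i\<in>I. (cmod (\<Sum>j\<in>J. (A i j + B i j) * \<xi> j))\<^sup>2)
      = L2_set (\<lambda>i. cmod ((\<Sum>j\<in>J. A i j * \<xi> j) + (\<Sum>j\<in>J. B i j * \<xi> j))) I"
    unfolding L2_set_def by (simp add: distrib_right sum.distrib)
  also have "\<dots> \<le> L2_set (\<lambda>i. cmod (\<Sum>j\<in>J. A i j * \<xi> j) + cmod (\<Sum>j\<in>J. B i j * \<xi> j)) I"
    by (rule L2_set_mono) (auto intro: norm_triangle_ineq)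
  also have "\<dots> \<le> L2_set (\<lambda>i. cmod (\<Sum>j\<in>J. A i j * \<xi> j)) I
                 + L2_set (\<lambda>i. cmod (\<Sum>j\<in>J. B i j * \<xi> j)) I"
    by (rule L2_set_triangle_ineq)
  also have "\<dots> \<le> opnorm I J A + opnorm I J B"
    using le_opnorm[OF assms \<xi>, of A] le_opnorm[OF assms \<xi>, of B]
    unfolding L2_set_def by simp
  finally show "sqrt (\<Sum>i\<in>I. (cmod (\<Sum>j\<in>J. (A i j + B i j) * \<xi> j))\<^sup>2)
                \<le> opnorm I J A + opnorm I J B" .
qed

lemma opnorm_scale:
  assumes "finite I" "finite J"
  shows "opnorm I J (\<lambda>i j. c * A i j) \<le> cmod c * opnorm I J A"
proof (rule opnorm_le)
  fix \<xi> assume \<xi>: "(\<Sum>j\<in>J. (cmod (\<xi> j))\<^sup>2) \<le> 1"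
  have "sqrt (\<Sum>i\<in>I. (cmod (\<Sum>j\<in>J. c * A i j * \<xi> j))\<^sup>2)
      = L2_set (\<lambda>i. cmod c * cmod (\<Sum>j\<in>J. A i j * \<xi> j)) I"
    unfolding L2_set_def by (simp add: mult.assoc norm_mult flip: sum_distrib_left)
  also have "\<dots> = cmod c * L2_set (\<lambda>i. cmod (\<Sum>j\<in>J. A i j * \<xi> j)) I"
    by (rule L2_set_right_distrib[symmetric]) simp
  also have "\<dots> \<le> cmod c * opnorm I J A"
    using le_opnorm[OF assms \<xi>, of A] unfolding L2_set_def by (simp add: mult_left_mono)
  finally show "sqrt (\<Sum>i\<in>I. (cmod (\<Sum>j\<in>J. c * A i j * \<xi> j))\<^sup>2) \<le> cmod c * opnorm I J A" .
qed

lemma opnorm_sum_le: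
  assumes "finite I" "finite J" "finite F"
  shows "opnorm I J (\<lambda>i j. \<Sum>x\<in>F. f x i j) \<le> (\<Sum>x\<in>F. opnorm I J (f x))"
  using assms(3)
proof (induction F rule: finite_induct)
  case empty
  show ?case by (simp add: opnorm_le)
next
  case (insert a F)
  then have "opnorm I J (\<lambda>i j. \<Sum>x\<in>insert a F. f x i j)
           \<le> opnorm I J (f a) + opnorm I J (\<lambda>i j. \<Sum>x\<in>F. f x i j)"
    using opnorm_triangle[OF assms(1,2), of "f a"] by simp
  with insert show ?case by simp
qed

lemma opnorm_submatrix_le:
  assumes "finite I" "finite J" "inj_on f I'" "f ` I' \<subseteq> I" "inj_on g J'" "g ` J' \<subseteq> J"
    and "\<And>i j. i \<in> I' \<Longrightarrow> j \<in> J' \<Longrightarrow> B i j = A (f i) (g j)"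
  shows "opnorm I' J' B \<le> opnorm I J A"
proof (rule opnorm_le_opnormI[OF assms(1,2)])
  fix \<xi> assume \<xi>: "(\<Sum>j\<in>J'. (cmod (\<xi> j))\<^sup>2) \<le> 1"
  have fin: "finite I'" "finite J'"
    using assms(1-6) finite_imageD finite_subset by metis+
  define \<xi>' where "\<xi>' j = (if j \<in> g ` J' then \<xi> (inv_into J' g j) else 0)" for j
  have \<xi>'g: "\<xi>' (g j) = \<xi> j" if "j \<in> J'" for j
    using that assms(5) by (simp add: \<xi>'_def)
  have "(\<Sum>j\<in>J. (cmod (\<xi>' j))\<^sup>2) = (\<Sum>j\<in>g ` J'. (cmod (\<xi>' j))\<^sup>2)"
    using assms(2,6) by (intro sum.mono_neutral_right) (auto simp: \<xi>'_def)
  also have "\<dots> = (\<Sum>j\<in>J'. (cmod (\<xi> j))\<^sup>2)"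
    using assms(5) by (simp add: sum.reindex \<xi>'g)
  finally have norm\<xi>': "(\<Sum>j\<in>J. (cmod (\<xi>' j))\<^sup>2) \<le> 1" using \<xi> by simp
  have row: "(\<Sum>j\<in>J'. B i j * \<xi> j) = (\<Sum>j\<in>J. A (f i) j * \<xi>' j)" if "i \<in> I'" for i
  proof -
    have "(\<Sum>j\<in>J. A (f i) j * \<xi>' j) = (\<Sum>j\<in>g ` J'. A (f i) j * \<xi>' j)"
      using assms(2,6) by (intro sum.mono_neutral_right) (auto simp: \<xi>'_def)
    also have "\<dots> = (\<Sum>j\<in>J'. B i j * \<xi> j)"
      using assms(5,7) that by (simp add: sum.reindex \<xi>'g)
    finally show ?thesis by simp
  qed
  have "(\<Sum>i\<in>I'. (cmod (\<Sum>j\<in>J'. B i j * \<xi> j))\<^sup>2) = (\<Sum>i\<in>f ` I'. (cmod (\<Sum>j\<in>J. A i j * \<xi>' j))\<^sup>2)"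
    using assms(3) by (simp add: sum.reindex row)
  also have "\<dots> \<le> (\<Sum>i\<in>I. (cmod (\<Sum>j\<in>J. A i j * \<xi>' j))\<^sup>2)"
    using assms(1,4) by (intro sum_mono2) auto
  finally show "\<exists>\<xi>'. (\<Sum>j\<in>J. (cmod (\<xi>' j))\<^sup>2) \<le> 1 \<and>
      (\<Sum>i\<in>I'. (cmod (\<Sum>j\<in>J'. B i j * \<xi> j))\<^sup>2) \<le> (\<Sum>i\<in>I. (cmod (\<Sum>j\<in>J. A i j * \<xi>' j))\<^sup>2)"
    using norm\<xi>' by blast
qed

lemma opnorm_le_opnorm_support:
  assumes "finite I" "finite J" "I0 \<subseteq> I" "J0 \<subseteq> J"
    and "\<And>i j. i \<in> I \<Longrightarrow> j \<in> J \<Longrightarrow> A i j \<noteq> 0 \<Longrightarrow> i \<in> I0 \<and> j \<in> J0"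
  shows "opnorm I J A \<le> opnorm I0 J0 A"
proof (rule opnorm_le_opnormI)
  show "finite I0" "finite J0" using assms(1-4) finite_subset by auto
  fix \<xi> assume \<xi>: "(\<Sum>j\<in>J. (cmod (\<xi> j))\<^sup>2) \<le> 1"
  have "(\<Sum>j\<in>J0. (cmod (\<xi> j))\<^sup>2) \<le> (\<Sum>j\<in>J. (cmod (\<xi> j))\<^sup>2)"
    using assms(2,4) by (intro sum_mono2) auto
  moreover have row: "(\<Sum>j\<in>J. A i j * \<xi> j) = (if i \<in> I0 then \<Sum>j\<in>J0. A i j * \<xi> j else 0)"
    if "i \<in> I" for i
    using that assms(2,4) by (auto intro!: sum.mono_neutral_right sum.neutral) (use assms(5) that in blast)+
  have "(\<Sum>i\<in>I. (cmod (\<Sum>j\<in>J. A i j * \<xi> j))\<^sup>2) = (\<Sum>i\<in>I0. (cmod (\<Sum>j\<in>J0. A i j * \<xi> j))\<^sup>2)"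
    using assms(1,3) by (simp add: row if_distrib[of "\<lambda>x. (cmod x)\<^sup>2"] sum.If_cases Int_absorb1)
  ultimately show "\<exists>\<xi>'. (\<Sum>j\<in>J0. (cmod (\<xi>' j))\<^sup>2) \<le> 1 \<and>
      (\<Sum>i\<in>I. (cmod (\<Sum>j\<in>J. A i j * \<xi> j))\<^sup>2) \<le> (\<Sum>i\<in>I0. (cmod (\<Sum>j\<in>J0. A i j * \<xi>' j))\<^sup>2)"
    using \<xi> by (intro exI[of _ \<xi>]) auto
qed

section \<open>The norm of M_k(T_n)\<close>

text \<open>For X in M_k(T_n) let phi_X : M_n \<rightarrow> M_k be the map a \<mapsto> [<X_ij, a>].
  Then block_opnorm m A is the norm of A in M_m(M_n), ampliation_opnorm k X m A is the norm of
  (id_m \<otimes> phi_X)(A), and Mk_Tn_norm k X is the cb-norm of phi_X.\<close>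

definition block_opnorm :: "nat \<Rightarrow> (nat \<Rightarrow> nat \<Rightarrow> 'n::finite tn) \<Rightarrow> real" where
  "block_opnorm m A = opnorm ({..<m} \<times> UNIV) ({..<m} \<times> UNIV) (\<lambda>(r,p) (s,q). A r s p q)"

definition ampliation_opnorm ::
  "nat \<Rightarrow> (nat \<Rightarrow> nat \<Rightarrow> 'n::finite tn) \<Rightarrow> nat \<Rightarrow> (nat \<Rightarrow> nat \<Rightarrow> 'n tn) \<Rightarrow> real" where
  "ampliation_opnorm k X m A = opnorm ({..<m} \<times> {..<k}) ({..<m} \<times> {..<k})
     (\<lambda>(r,i) (s,j). \<Sum>p\<in>UNIV. \<Sum>q\<in>UNIV. X i j p q * A r s p q)"

lemma Mk_Tn_norm_altdef:
  "Mk_Tn_norm k X = Sup {ampliation_opnorm k X m A | m A. block_opnorm m A \<le> 1}"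
  unfolding Mk_Tn_norm_def ampliation_opnorm_def block_opnorm_def by simp

definition single_entry_block ::
  "(nat \<Rightarrow> nat \<Rightarrow> 'n tn) \<Rightarrow> nat \<Rightarrow> nat \<Rightarrow> 'n \<Rightarrow> 'n \<Rightarrow> nat \<times> nat \<Rightarrow> nat \<times> nat \<Rightarrow> complex" where
  "single_entry_block A i0 j0 p q = (\<lambda>(r,i) (s,j). if i = i0 \<and> j = j0 then A r s p q else 0)"

lemma opnorm_single_entry_block_le:
  fixes i0 j0 k :: nat
  assumes "i0 < k" "j0 < k"
  shows "opnorm ({..<m} \<times> {..<k}) ({..<m} \<times> {..<k}) (single_entry_block A i0 j0 p q)
         \<le> block_opnorm m A"
proof -
  have "opnorm ({..<m} \<times> {..<k}) ({..<m} \<times> {..<k}) (single_entry_block A i0 j0 p q)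
      \<le> opnorm ({..<m} \<times> {i0}) ({..<m} \<times> {j0}) (single_entry_block A i0 j0 p q)"
    using assms by (intro opnorm_le_opnorm_support)
                   (auto simp: single_entry_block_def finite_SigmaI split: if_splits)
  also have "\<dots> \<le> block_opnorm m A"
    unfolding block_opnorm_def
    by (rule opnorm_submatrix_le[where f = "\<lambda>(r,i). (r,p)" and g = "\<lambda>(s,j). (s,q)"])
       (auto simp: inj_on_def single_entry_block_def)
  finally show ?thesis .
qed

lemma sum_single_entry_blocks:
  assumes "i < k" "j < k"
  shows "(\<Sum>i0<k. \<Sum>j0<k. \<Sum>p\<in>UNIV. \<Sum>q\<in>UNIV. X i0 j0 p q * single_entry_block A i0 j0 p q (r,i) (s,j))
       = (\<Sum>p\<in>UNIV. \<Sum>q\<in>UNIV. X i j p q * A r s p q)"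
proof -
  have "(\<Sum>p\<in>UNIV. \<Sum>q\<in>UNIV. X i0 j0 p q * single_entry_block A i0 j0 p q (r,i) (s,j))
      = (if j0 = j then if i0 = i then \<Sum>p\<in>UNIV. \<Sum>q\<in>UNIV. X i j p q * A r s p q else 0 else 0)"
    for i0 j0 by (simp add: single_entry_block_def)
  with assms show ?thesis by (simp add: sum.delta sum.delta')
qed

text \<open>A uniform bound is needed because Sup of an unbounded set of reals is unspecified.\<close>

lemma ampliation_opnorm_le_l1:
  fixes X A :: "nat \<Rightarrow> nat \<Rightarrow> 'n::finite tn"
  assumes "block_opnorm m A \<le> 1"
  shows "ampliation_opnorm k X m A \<le> (\<Sum>i0<k. \<Sum>j0<k. \<Sum>p\<in>UNIV. \<Sum>q\<in>UNIV. cmod (X i0 j0 p q))"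
proof -
  let ?I = "{..<m} \<times> {..<k}"
  let ?E = "single_entry_block A"
  have "ampliation_opnorm k X m A
      = opnorm ?I ?I (\<lambda>a b. \<Sum>i0<k. \<Sum>j0<k. \<Sum>p\<in>UNIV. \<Sum>q\<in>UNIV. X i0 j0 p q * ?E i0 j0 p q a b)"
    unfolding ampliation_opnorm_def by (rule opnorm_cong) (auto simp: sum_single_entry_blocks)
  also have "\<dots> \<le> (\<Sum>i0<k. opnorm ?I ?I (\<lambda>a b. \<Sum>j0<k. \<Sum>p\<in>UNIV. \<Sum>q\<in>UNIV.
                    X i0 j0 p q * ?E i0 j0 p q a b))"
    by (rule opnorm_sum_le) auto
  also have "\<dots> \<le> (\<Sum>i0<k. \<Sum>j0<k. opnorm ?I ?I (\<lambda>a b. \<Sum>p\<in>UNIV. \<Sum>q\<in>UNIV.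
                    X i0 j0 p q * ?E i0 j0 p q a b))"
    by (intro sum_mono opnorm_sum_le) auto
  also have "\<dots> \<le> (\<Sum>i0<k. \<Sum>j0<k. \<Sum>p\<in>UNIV. opnorm ?I ?I (\<lambda>a b. \<Sum>q\<in>UNIV.
                    X i0 j0 p q * ?E i0 j0 p q a b))"
    by (intro sum_mono opnorm_sum_le) auto
  also have "\<dots> \<le> (\<Sum>i0<k. \<Sum>j0<k. \<Sum>p\<in>UNIV. \<Sum>q\<in>UNIV.
                    opnorm ?I ?I (\<lambda>a b. X i0 j0 p q * ?E i0 j0 p q a b))"
    by (intro sum_mono opnorm_sum_le) auto
  also have "\<dots> \<le> (\<Sum>i0<k. \<Sum>j0<k. \<Sum>p\<in>UNIV. \<Sum>q\<in>UNIV. cmod (X i0 j0 p q))"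
  proof (intro sum_mono)
    fix i0 j0 p q assume "i0 \<in> {..<k}" "j0 \<in> {..<k}"
    then have "opnorm ?I ?I (?E i0 j0 p q) \<le> 1"
      using opnorm_single_entry_block_le[of i0 k j0 m A p q] assms by simp
    then have "cmod (X i0 j0 p q) * opnorm ?I ?I (?E i0 j0 p q) \<le> cmod (X i0 j0 p q)"
      by (simp add: mult_left_le)
    then show "opnorm ?I ?I (\<lambda>a b. X i0 j0 p q * ?E i0 j0 p q a b) \<le> cmod (X i0 j0 p q)"
      using opnorm_scale[of ?I ?I "X i0 j0 p q" "?E i0 j0 p q"] by simp
  qed
  finally show ?thesis .
qed

lemma block_opnorm_0: "block_opnorm 0 A = 0"
  unfolding block_opnorm_def opnorm_def by simp

lemma bdd_above_ampliation_opnorms: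
  "bdd_above {ampliation_opnorm k X m A | m A. block_opnorm m A \<le> 1}"
  by (rule bdd_aboveI, clarify, rule ampliation_opnorm_le_l1)

lemma le_Mk_Tn_norm: "block_opnorm m A \<le> 1 \<Longrightarrow> ampliation_opnorm k X m A \<le> Mk_Tn_norm k X"
  unfolding Mk_Tn_norm_altdef by (rule cSup_upper[OF _ bdd_above_ampliation_opnorms]) blast

lemma Mk_Tn_norm_le:
  assumes "\<And>m A. block_opnorm m A \<le> 1 \<Longrightarrow> ampliation_opnorm k X m A \<le> c"
  shows "Mk_Tn_norm k X \<le> c"
  unfolding Mk_Tn_norm_altdef
proof (rule cSup_least)
  show "{ampliation_opnorm k X m A | m A. block_opnorm m A \<le> 1} \<noteq> {}"
    by (rule ex_in_conv[THEN iffD1], rule exI, rule CollectI, rule exI[of _ 0], rule exI,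
        rule conjI[OF refl]) (simp add: block_opnorm_0)
qed (use assms in blast)

lemma Mk_Tn_norm_nonneg: "0 \<le> Mk_Tn_norm k X"
proof -
  have "0 = ampliation_opnorm k X 0 (\<lambda>r s p q. 0)"
    by (simp add: ampliation_opnorm_def opnorm_def)
  also have "\<dots> \<le> Mk_Tn_norm k X"
    by (rule le_Mk_Tn_norm) (simp add: block_opnorm_0)
  finally show ?thesis .
qed

lemma Mk_Tn_norm_triangle:
  fixes X Y :: "nat \<Rightarrow> nat \<Rightarrow> 'n::finite tn"
  shows "Mk_Tn_norm k (\<lambda>i j p q. X i j p q + Y i j p q) \<le> Mk_Tn_norm k X + Mk_Tn_norm k Y"
proof (rule Mk_Tn_norm_le)
  fix m and A :: "nat \<Rightarrow> nat \<Rightarrow> 'n tn" assume A: "block_opnorm m A \<le> 1"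
  let ?I = "{..<m} \<times> {..<k}"
  have "ampliation_opnorm k (\<lambda>i j p q. X i j p q + Y i j p q) m A
      = opnorm ?I ?I (\<lambda>a b. (\<lambda>(r,i) (s,j). \<Sum>p\<in>UNIV. \<Sum>q\<in>UNIV. X i j p q * A r s p q) a b
                           + (\<lambda>(r,i) (s,j). \<Sum>p\<in>UNIV. \<Sum>q\<in>UNIV. Y i j p q * A r s p q) a b)"
    unfolding ampliation_opnorm_def
    by (rule opnorm_cong) (auto simp: distrib_right sum.distrib)
  also have "\<dots> \<le> ampliation_opnorm k X m A + ampliation_opnorm k Y m A"
    unfolding ampliation_opnorm_def by (rule opnorm_triangle) auto
  finally show "ampliation_opnorm k (\<lambda>i j p q. X i j p q + Y i j p q) m A
           \<le> Mk_Tn_norm k X + Mk_Tn_norm k Y"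
    using le_Mk_Tn_norm[OF A, of k X] le_Mk_Tn_norm[OF A, of k Y] by linarith
qed

lemma Mk_Tn_norm_scale:
  fixes X :: "nat \<Rightarrow> nat \<Rightarrow> 'n::finite tn"
  shows "Mk_Tn_norm k (\<lambda>i j p q. c * X i j p q) \<le> cmod c * Mk_Tn_norm k X"
proof (rule Mk_Tn_norm_le)
  fix m and A :: "nat \<Rightarrow> nat \<Rightarrow> 'n tn" assume A: "block_opnorm m A \<le> 1"
  let ?I = "{..<m} \<times> {..<k}"
  have "ampliation_opnorm k (\<lambda>i j p q. c * X i j p q) m A
      = opnorm ?I ?I (\<lambda>a b. c * (\<lambda>(r,i) (s,j). \<Sum>p\<in>UNIV. \<Sum>q\<in>UNIV. X i j p q * A r s p q) a b)"
    unfolding ampliation_opnorm_def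
    by (rule opnorm_cong) (auto simp: sum_distrib_left mult.assoc)
  also have "\<dots> \<le> cmod c * ampliation_opnorm k X m A"
    unfolding ampliation_opnorm_def by (rule opnorm_scale) auto
  finally show "ampliation_opnorm k (\<lambda>i j p q. c * X i j p q) m A \<le> cmod c * Mk_Tn_norm k X"
    using le_Mk_Tn_norm[OF A, of k X] by (meson mult_left_mono norm_ge_zero order_trans)
qed

section \<open>The quotient norm of M_k(V)\<close>

lemma qnorm_altdef:
  "qnorm W k X = Inf {Mk_Tn_norm k (mdiff X Y) | Y. \<forall>i<k. \<forall>j<k. Y i j \<in> W}"
  unfolding qnorm_def mdiff_def ..

lemma qnorm_le_Mk_Tn_norm:
  assumes "\<forall>i<k. \<forall>j<k. Y i j \<in> W"
  shows "qnorm W k X \<le> Mk_Tn_norm k (mdiff X Y)"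
  unfolding qnorm_altdef
proof (rule cInf_lower)
  show "bdd_below {Mk_Tn_norm k (mdiff X Y) | Y. \<forall>i<k. \<forall>j<k. Y i j \<in> W}"
    by (rule bdd_belowI[of _ 0]) (auto simp: Mk_Tn_norm_nonneg)
qed (use assms in blast)

lemma qnorm_lessE:
  assumes "is_subspace_Tn W" "qnorm W k X < c"
  obtains Y where "\<forall>i<k. \<forall>j<k. Y i j \<in> W" "Mk_Tn_norm k (mdiff X Y) < c"
proof -
  let ?S = "{Mk_Tn_norm k (mdiff X Y) | Y. \<forall>i<k. \<forall>j<k. Y i j \<in> W}"
  have "(\<lambda>p q. 0) \<in> W" using assms(1) unfolding is_subspace_Tn_def by simp
  then have "Mk_Tn_norm k (mdiff X (\<lambda>i j p q. 0)) \<in> ?S"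
    by (intro CollectI exI[of _ "\<lambda>i j p q. 0"] conjI refl) simp
  then have "?S \<noteq> {}" by (rule ex_in_conv[THEN iffD1, OF exI])
  from cInf_lessD[OF this assms(2)[unfolded qnorm_altdef]] obtain v where "v \<in> ?S" "v < c"
    by blast
  then show ?thesis using that by blast
qed

lemma qnorm_triangle:
  assumes W: "is_subspace_Tn W"
  shows "qnorm W k X \<le> qnorm W k Z + qnorm W k (mdiff X Z)"
proof (rule field_le_epsilon)
  fix e :: real assume "0 < e"
  have "qnorm W k Z < qnorm W k Z + e/2" using \<open>0 < e\<close> by simp
  then obtain Y1 where Y1: "\<forall>i<k. \<forall>j<k. Y1 i j \<in> W" "Mk_Tn_norm k (mdiff Z Y1) < qnorm W k Z + e/2"
    by (rule qnorm_lessE[OF W])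
  have "qnorm W k (mdiff X Z) < qnorm W k (mdiff X Z) + e/2" using \<open>0 < e\<close> by simp
  then obtain Y2 where Y2: "\<forall>i<k. \<forall>j<k. Y2 i j \<in> W"
      "Mk_Tn_norm k (mdiff (mdiff X Z) Y2) < qnorm W k (mdiff X Z) + e/2"
    by (rule qnorm_lessE[OF W])
  have "\<forall>i<k. \<forall>j<k. (\<lambda>p q. Y1 i j p q + Y2 i j p q) \<in> W"
    using Y1(1) Y2(1) W unfolding is_subspace_Tn_def by blast
  then have "qnorm W k X \<le> Mk_Tn_norm k (mdiff X (\<lambda>i j p q. Y1 i j p q + Y2 i j p q))"
    by (rule qnorm_le_Mk_Tn_norm)
  also have "mdiff X (\<lambda>i j p q. Y1 i j p q + Y2 i j p q)
      = (\<lambda>i j p q. mdiff Z Y1 i j p q + mdiff (mdiff X Z) Y2 i j p q)"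
    unfolding mdiff_def by (simp add: algebra_simps)
  also have "Mk_Tn_norm k \<dots> \<le> Mk_Tn_norm k (mdiff Z Y1) + Mk_Tn_norm k (mdiff (mdiff X Z) Y2)"
    by (rule Mk_Tn_norm_triangle)
  finally show "qnorm W k X \<le> qnorm W k Z + qnorm W k (mdiff X Z) + e"
    using Y1(2) Y2(2) by linarith
qed

lemma matrix_unit_ball_closed:
  assumes "is_subspace_Tn W"
    and "\<forall>\<epsilon>>0. \<exists>Y. matrix_unit_ball W k Y \<and> qnorm W k (mdiff X Y) < \<epsilon>"
  shows "matrix_unit_ball W k X"
  unfolding matrix_unit_ball_def
proof (rule field_le_epsilon)
  fix e :: real assume "0 < e"
  then obtain Y where "qnorm W k Y \<le> 1" "qnorm W k (mdiff X Y) < e"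
    using assms(2) unfolding matrix_unit_ball_def by blast
  then show "qnorm W k X \<le> 1 + e" using qnorm_triangle[OF assms(1), of k X Y] by linarith
qed

lemma qnorm_le_1_approxE:
  assumes W: "is_subspace_Tn W" and X: "qnorm W k X \<le> 1" and "0 < e"
  obtains Z where "Mk_Tn_norm k Z \<le> 1" "qnorm W k (mdiff X Z) < e"
proof -
  have "qnorm W k X < 1 + e" using X \<open>0 < e\<close> by simp
  then obtain Y where Y: "\<forall>i<k. \<forall>j<k. Y i j \<in> W" "Mk_Tn_norm k (mdiff X Y) < 1 + e"
    by (rule qnorm_lessE[OF W])
  define D where "D = Mk_Tn_norm k (mdiff X Y)"
  define t :: real where "t = 1 / (1 + e)"
  have t: "0 < t" "t < 1" "t * (1 + e) = 1" using \<open>0 < e\<close> by (auto simp: t_def)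
  define Z where "Z = (\<lambda>i j p q. of_real t * mdiff X Y i j p q)"
  have "Mk_Tn_norm k Z \<le> cmod (of_real t) * D"
    unfolding Z_def D_def by (rule Mk_Tn_norm_scale)
  also have "\<dots> = t * D" using t by simp
  also have "\<dots> \<le> 1"
    using Y(2) t unfolding D_def by (metis less_eq_real_def mult_strict_left_mono)
  finally have "Mk_Tn_norm k Z \<le> 1" .
  have "mdiff (mdiff X Z) Y = (\<lambda>i j p q. of_real (1 - t) * mdiff X Y i j p q)"
    unfolding Z_def mdiff_def by (simp add: algebra_simps)
  then have "qnorm W k (mdiff X Z) \<le> Mk_Tn_norm k (\<lambda>i j p q. of_real (1 - t) * mdiff X Y i j p q)"
    using qnorm_le_Mk_Tn_norm[OF Y(1), of "mdiff X Z"] by simp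
  also have "\<dots> \<le> cmod (of_real (1 - t)) * D"
    unfolding D_def by (rule Mk_Tn_norm_scale)
  also have "\<dots> = (1 - t) * D" by (simp only: norm_of_real) (use t in simp)
  also have "\<dots> < (1 - t) * (1 + e)"
    using Y(2) t unfolding D_def by (intro mult_strict_left_mono) auto
  also have "\<dots> = e" using t by (simp add: algebra_simps)
  finally show ?thesis by (rule that[OF \<open>Mk_Tn_norm k Z \<le> 1\<close>])
qed

section \<open>Matrix units and slices\<close>

text \<open>Here g enumerates 'n by {..<CARD('n)}; matrix_units g is x = [e_(g p, g q)] in
  M_n(T_n) \<subseteq> K(V), and reindex_nat g Z carries the coefficients of Z to nat indices.\<close>

definition matrix_units :: "(nat \<Rightarrow> 'n::finite) \<Rightarrow> nat \<Rightarrow> nat \<Rightarrow> 'n tn" where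
  "matrix_units g p q = (if p < CARD('n) \<and> q < CARD('n)
     then (\<lambda>a b. if a = g p \<and> b = g q then 1 else 0) else (\<lambda>a b. 0))"

definition reindex_nat ::
  "(nat \<Rightarrow> 'n::finite) \<Rightarrow> (nat \<Rightarrow> nat \<Rightarrow> 'n tn) \<Rightarrow> nat \<Rightarrow> nat \<Rightarrow> nat \<Rightarrow> nat \<Rightarrow> complex" where
  "reindex_nat g Z i j p q = (if p < CARD('n) \<and> q < CARD('n) then Z i j (g p) (g q) else 0)"

lemma in_KV_finite_support:
  assumes "is_subspace_Tn W" and "\<And>p q. N \<le> p \<or> N \<le> q \<Longrightarrow> x p q = (\<lambda>a b. 0)"
  shows "in_KV W x"
  unfolding in_KV_def
proof (intro allI impI exI[of _ N])
  fix e :: real and N1 N2 assume "0 < e" "N \<le> N1" "N \<le> N2"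
  have trunc: "trunc N' x = x" if "N \<le> N'" for N'
  proof -
    have "trunc N' x i j = x i j" for i j using assms(2)[of i j] that by (auto simp: trunc_def)
    then show ?thesis by (intro ext) simp
  qed
  have "\<forall>i<max N1 N2. \<forall>j<max N1 N2. (\<lambda>p q. 0) \<in> W"
    using assms(1) unfolding is_subspace_Tn_def by simp
  then have "qnorm W (max N1 N2) (mdiff x x) \<le> Mk_Tn_norm (max N1 N2) (mdiff (mdiff x x) (\<lambda>i j p q. 0))"
    by (rule qnorm_le_Mk_Tn_norm)
  also have "mdiff (mdiff x x) (\<lambda>i j p q. 0) = (\<lambda>i j p q. 0 * x i j p q)"
    by (simp add: mdiff_def)
  also have "Mk_Tn_norm (max N1 N2) \<dots> \<le> 0"
    using Mk_Tn_norm_scale[of "max N1 N2" 0 x] by simp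
  finally show "qnorm W (max N1 N2) (mdiff (trunc N1 x) (trunc N2 x)) < e"
    using \<open>0 < e\<close> trunc \<open>N \<le> N1\<close> \<open>N \<le> N2\<close> by simp
qed

lemma slice_reindex_nat_matrix_units:
  assumes g: "bij_betw g {..<CARD('n)} (UNIV :: 'n::finite set)"
  shows "slice CARD('n) (reindex_nat g Z) (matrix_units g) = Z"
proof (intro ext)
  fix i j and a b :: 'n
  have "slice CARD('n) (reindex_nat g Z) (matrix_units g) i j a b
      = (\<Sum>p<CARD('n). \<Sum>q<CARD('n). Z i j (g p) (g q) * (if a = g p \<and> b = g q then 1 else 0))"
    unfolding slice_def reindex_nat_def matrix_units_def by simp
  also have "\<dots> = (\<Sum>a'\<in>UNIV. \<Sum>b'\<in>UNIV. Z i j a' b' * (if a = a' \<and> b = b' then 1 else 0))"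
    by (simp add: sum.reindex_bij_betw[OF g, symmetric])
  also have "\<dots> = (\<Sum>a'\<in>UNIV. if a = a' then Z i j a' b else 0)"
    by (intro sum.cong refl) (auto simp: if_distrib[of "times _"] cong: if_cong)
  also have "\<dots> = Z i j a b"
    by simp
  finally show "slice CARD('n) (reindex_nat g Z) (matrix_units g) i j a b = Z i j a b" .
qed

definition pullback_block ::
  "('n::finite \<Rightarrow> nat) \<Rightarrow> nat \<Rightarrow> (nat \<Rightarrow> nat \<Rightarrow> nat \<Rightarrow> nat \<Rightarrow> complex) \<Rightarrow> nat \<Rightarrow> nat \<Rightarrow> 'n tn" where
  "pullback_block h M A r s a b = (if h a < M \<and> h b < M then A r s (h a) (h b) else 0)"

lemma block_opnorm_pullback_block_le:
  fixes h :: "'n::finite \<Rightarrow> nat"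
  assumes "inj h"
  shows "block_opnorm m (pullback_block h M A)
         \<le> opnorm ({..<m} \<times> {..<M}) ({..<m} \<times> {..<M}) (\<lambda>(r,p) (s,q). A r s p q)"
proof -
  let ?I0 = "{..<m} \<times> {a. h a < M}"
  have inj: "inj_on (\<lambda>(r,a). (r, h a)) ?I0" using assms by (auto simp: inj_on_def dest: injD)
  have "block_opnorm m (pullback_block h M A)
      \<le> opnorm ?I0 ?I0 (\<lambda>(r,a) (s,b). pullback_block h M A r s a b)"
    unfolding block_opnorm_def
    by (rule opnorm_le_opnorm_support) (auto simp: pullback_block_def split: if_splits)
  also have "\<dots> \<le> opnorm ({..<m} \<times> {..<M}) ({..<m} \<times> {..<M}) (\<lambda>(r,p) (s,q). A r s p q)"
    by (rule opnorm_submatrix_le[where f = "\<lambda>(r,a). (r, h a)" and g = "\<lambda>(r,a). (r, h a)"])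
       (use inj in \<open>auto simp: pullback_block_def\<close>)
  finally show ?thesis .
qed

lemma sum_reindex_nat_mult:
  assumes g: "bij_betw g {..<CARD('n)} (UNIV :: 'n::finite set)"
  shows "(\<Sum>p<M. \<Sum>q<M. reindex_nat g Z i j p q * A r s p q)
       = (\<Sum>a\<in>UNIV. \<Sum>b\<in>UNIV. Z i j a b * pullback_block (inv_into {..<CARD('n)} g) M A r s a b)"
proof -
  let ?n = "CARD('n)"
  let ?F = "\<lambda>(p,q). Z i j (g p) (g q) * A r s p q"
  have hg: "inv_into {..<?n} g (g p) = p" if "p < ?n" for p
    using g that unfolding bij_betw_def by (simp add: inv_into_f_f)
  have "(\<Sum>a\<in>UNIV. \<Sum>b\<in>UNIV. Z i j a b * pullback_block (inv_into {..<?n} g) M A r s a b)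
      = (\<Sum>p<?n. \<Sum>q<?n. Z i j (g p) (g q) * pullback_block (inv_into {..<?n} g) M A r s (g p) (g q))"
    by (simp add: sum.reindex_bij_betw[OF g, symmetric])
  also have "\<dots> = (\<Sum>(p,q)\<in>{..<?n} \<times> {..<?n}. if (p,q) \<in> {..<M} \<times> {..<M} then ?F (p,q) else 0)"
    unfolding sum.cartesian_product by (intro sum.cong refl) (auto simp: pullback_block_def hg)
  also have "\<dots> = sum ?F ({..<?n} \<times> {..<?n} \<inter> {..<M} \<times> {..<M})"
    by (subst sum.inter_restrict) (auto intro!: sum.cong)
  also have "\<dots> = (\<Sum>(p,q)\<in>{..<M} \<times> {..<M}. if (p,q) \<in> {..<?n} \<times> {..<?n} then ?F (p,q) else 0)"
    by (subst Int_commute, subst sum.inter_restrict) (auto intro!: sum.cong)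
  also have "\<dots> = (\<Sum>p<M. \<Sum>q<M. reindex_nat g Z i j p q * A r s p q)"
    unfolding sum.cartesian_product by (intro sum.cong refl) (auto simp: reindex_nat_def)
  finally show ?thesis by simp
qed

lemma Mk_T_norm_reindex_nat_le:
  assumes g: "bij_betw g {..<CARD('n)} (UNIV :: 'n::finite set)"
  shows "Mk_T_norm k (reindex_nat g Z) \<le> Mk_Tn_norm k Z"
  unfolding Mk_T_norm_def
proof (rule cSup_least)
  show "{opnorm ({..<m} \<times> {..<k}) ({..<m} \<times> {..<k})
          (\<lambda>(r,i) (s,j). \<Sum>p<M. \<Sum>q<M. reindex_nat g Z i j p q * A r s p q) | m M A.
          opnorm ({..<m} \<times> {..<M}) ({..<m} \<times> {..<M})
            (\<lambda>(r,p) (s,q). (A :: nat \<Rightarrow> nat \<Rightarrow> nat \<Rightarrow> nat \<Rightarrow> complex) r s p q) \<le> 1} \<noteq> {}"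
    by (rule ex_in_conv[THEN iffD1], rule exI, rule CollectI, rule exI[of _ "0::nat"],
        rule exI[of _ "0::nat"], rule exI[of _ "\<lambda>r s p q. 0"], rule conjI[OF refl])
       (simp add: opnorm_def)
next
  fix v assume "v \<in> {opnorm ({..<m} \<times> {..<k}) ({..<m} \<times> {..<k})
          (\<lambda>(r,i) (s,j). \<Sum>p<M. \<Sum>q<M. reindex_nat g Z i j p q * A r s p q) | m M A.
          opnorm ({..<m} \<times> {..<M}) ({..<m} \<times> {..<M})
            (\<lambda>(r,p) (s,q). (A :: nat \<Rightarrow> nat \<Rightarrow> nat \<Rightarrow> nat \<Rightarrow> complex) r s p q) \<le> 1}"
  then obtain m M and A :: "nat \<Rightarrow> nat \<Rightarrow> nat \<Rightarrow> nat \<Rightarrow> complex"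
    where v: "v = opnorm ({..<m} \<times> {..<k}) ({..<m} \<times> {..<k})
          (\<lambda>(r,i) (s,j). \<Sum>p<M. \<Sum>q<M. reindex_nat g Z i j p q * A r s p q)"
      and A: "opnorm ({..<m} \<times> {..<M}) ({..<m} \<times> {..<M}) (\<lambda>(r,p) (s,q). A r s p q) \<le> 1"
    by blast
  let ?h = "inv_into {..<CARD('n)} g"
  have "inj ?h"
    using bij_betw_inv_into[OF g] unfolding bij_betw_def by simp
  then have A': "block_opnorm m (pullback_block ?h M A) \<le> 1"
    using block_opnorm_pullback_block_le A by (blast intro: order_trans)
  have "v = ampliation_opnorm k Z m (pullback_block ?h M A)"
    unfolding v ampliation_opnorm_def sum_reindex_nat_mult[OF g] ..
  also have "\<dots> \<le> Mk_Tn_norm k Z"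
    by (rule le_Mk_Tn_norm[OF A'])
  finally show "v \<le> Mk_Tn_norm k Z" .
qed

lemma matrix_unit_ball_approx_by_slices:
  assumes W: "is_subspace_Tn W" and g: "bij_betw g {..<CARD('n)} (UNIV :: 'n::finite set)"
    and X: "matrix_unit_ball W k X" and "0 < e"
  shows "\<exists>N \<sigma>. supported_in N \<sigma> \<and> Mk_T_norm k \<sigma> \<le> 1 \<and>
           qnorm W k (mdiff X (slice N \<sigma> (matrix_units g))) < e"
proof -
  obtain Z where Z: "Mk_Tn_norm k Z \<le> 1" "qnorm W k (mdiff X Z) < e"
    using qnorm_le_1_approxE[OF W X[unfolded matrix_unit_ball_def] \<open>0 < e\<close>] by blast
  have "supported_in CARD('n) (reindex_nat g Z)"
    by (simp add: supported_in_def reindex_nat_def)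
  moreover have "Mk_T_norm k (reindex_nat g Z) \<le> 1"
    using Mk_T_norm_reindex_nat_le[OF g, of k Z] Z(1) by linarith
  moreover have "qnorm W k (mdiff X (slice CARD('n) (reindex_nat g Z) (matrix_units g))) < e"
    using Z(2) by (simp add: slice_reindex_nat_matrix_units[OF g])
  ultimately show ?thesis by blast
qed

theorem lemma6p1:
  fixes W :: "'n::finite tn set"
  assumes "is_subspace_Tn W"
  shows "operator_compact W (matrix_unit_ball W)"
proof -
  obtain g :: "nat \<Rightarrow> 'n" where g: "bij_betw g {..<CARD('n)} UNIV"
    using ex_bij_betw_nat_finite[of "UNIV :: 'n set"] by (auto simp: atLeast0LessThan)
  have "in_KV W (matrix_units g)"
    by (rule in_KV_finite_support[OF assms, of "CARD('n)"]) (auto simp: matrix_units_def)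
  then show ?thesis
    unfolding operator_compact_def
    using matrix_unit_ball_closed[OF assms] matrix_unit_ball_approx_by_slices[OF assms g]
    by blast
qed

end
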